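(* Let $C\in\mathscr{C}$ and let $K_C$ be obtained as follows: choose a distinguished triangle $S[-1]\to C\overset{a}{\to}T\to S$ with $S\in\mathcal{S},T\in\mathcal{T}$; choose a distinguished triangle $U\to T\overset{b}{\to}V[1]\to U[1]$ with $U\in\mathcal{U},V\in\mathcal{V}$; and choose a distinguished triangle $V\to K_C\overset{k_C}{\to}C\overset{b\circ a}{\to}V[1]$. Then: (1) $K_C\in\mathscr{C}^-$; (2) if $C\in\mathscr{C}^+$, then $K_C\in\mathcal{H}$.
   Context: $\mathscr{C}$ is a triangulated category with shift $[1]$; subcategories are full, additive, closed under isomorphisms and direct summands. $\mathrm{Ext}^1(X,Y)=\mathscr{C}(X,Y[1])$. $\mathcal{M}\ast\mathcal{N}$ is the full subcategory of objects $C$ admitting a distinguished triangle $M\to C\to N\to M[1]$ with $M\in\mathcal{M}$, $N\in\mathcal{N}$. A cotorsion pair $(\mathcal{U},\mathcal{V})$: $\mathrm{Ext}^1(\mathcal{U},\mathcal{V})=0$ and $\mathscr{C}=\mathcal{U}\ast\mathcal{V}[1]$. Fix a twin cotorsion pair, i.e. cotorsion pairs $(\mathcal{S},\mathcal{T}),(\mathcal{U},\mathcal{V})$ with $\mathrm{Ext}^1(\mathcal{S},\mathcal{V})=0$. Put $\mathcal{W}=\mathcal{T}\cap\mathcal{U}$, $\mathscr{C}^-=\mathcal{S}[-1]\ast\mathcal{W}$, $\mathscr{C}^+=\mathcal{W}\ast\mathcal{V}[1]$, $\mathcal{H}=\mathscr{C}^+\cap\mathscr{C}^-$. *)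

theory Defs
  imports Main
begin

text \<open>A (pre)additive category with a shift functor and a class of distinguished
triangles.  Objects have type 'o, morphisms type 'm; hom sets are explicit.
cmp g f is the composite g after f.\<close>

record ('o, 'm) tcat =
  obj  :: "'o set"
  hom  :: "'o \<Rightarrow> 'o \<Rightarrow> 'm set"
  cmp  :: "'m \<Rightarrow> 'm \<Rightarrow> 'm"
  ide  :: "'o \<Rightarrow> 'm"
  madd :: "'m \<Rightarrow> 'm \<Rightarrow> 'm"
  mneg :: "'m \<Rightarrow> 'm"
  mzero :: "'o \<Rightarrow> 'o \<Rightarrow> 'm"
  sh   :: "'o \<Rightarrow> 'o"
  shm  :: "'m \<Rightarrow> 'm"
  dist :: "('o \<times> 'o \<times> 'o \<times> 'm \<times> 'm \<times> 'm) set"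

definition iso_mor :: "('o,'m,'x) tcat_scheme \<Rightarrow> 'o \<Rightarrow> 'o \<Rightarrow> 'm \<Rightarrow> bool" where
  "iso_mor C X Y f \<longleftrightarrow> f \<in> hom C X Y \<and>
     (\<exists>g \<in> hom C Y X. cmp C g f = ide C X \<and> cmp C f g = ide C Y)"

definition isomorphic :: "('o,'m,'x) tcat_scheme \<Rightarrow> 'o \<Rightarrow> 'o \<Rightarrow> bool" where
  "isomorphic C X Y \<longleftrightarrow> (\<exists>f. iso_mor C X Y f)"

definition zero_obj :: "('o,'m,'x) tcat_scheme \<Rightarrow> 'o \<Rightarrow> bool" where
  "zero_obj C Z \<longleftrightarrow> Z \<in> obj C \<and>
     (\<forall>X \<in> obj C. hom C Z X = {mzero C Z X} \<and> hom C X Z = {mzero C X Z})"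

definition is_biprod :: "('o,'m,'x) tcat_scheme \<Rightarrow> 'o \<Rightarrow> 'o \<Rightarrow> 'o
    \<Rightarrow> 'm \<Rightarrow> 'm \<Rightarrow> 'm \<Rightarrow> 'm \<Rightarrow> bool" where
  "is_biprod C X Y P i1 i2 p1 p2 \<longleftrightarrow> P \<in> obj C \<and>
     i1 \<in> hom C X P \<and> i2 \<in> hom C Y P \<and> p1 \<in> hom C P X \<and> p2 \<in> hom C P Y \<and>
     cmp C p1 i1 = ide C X \<and> cmp C p2 i2 = ide C Y \<and>
     cmp C p2 i1 = mzero C X Y \<and> cmp C p1 i2 = mzero C Y X \<and>
     madd C (cmp C i1 p1) (cmp C i2 p2) = ide C P"

definition additive_cat :: "('o,'m,'x) tcat_scheme \<Rightarrow> bool" where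
  "additive_cat C \<longleftrightarrow>
     (\<forall>X Y X' Y' f. f \<in> hom C X Y \<longrightarrow> f \<in> hom C X' Y' \<longrightarrow> X = X' \<and> Y = Y') \<and>
     (\<forall>X Y. (X \<notin> obj C \<or> Y \<notin> obj C) \<longrightarrow> hom C X Y = {}) \<and>
     (\<forall>X \<in> obj C. ide C X \<in> hom C X X) \<and>
     (\<forall>X \<in> obj C. \<forall>Y \<in> obj C. \<forall>Z \<in> obj C. \<forall>f \<in> hom C X Y. \<forall>g \<in> hom C Y Z.
        cmp C g f \<in> hom C X Z) \<and>
     (\<forall>X \<in> obj C. \<forall>Y \<in> obj C. \<forall>f \<in> hom C X Y.
        cmp C f (ide C X) = f \<and> cmp C (ide C Y) f = f) \<and>
     (\<forall>W \<in> obj C. \<forall>X \<in> obj C. \<forall>Y \<in> obj C. \<forall>Z \<in> obj C.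
        \<forall>f \<in> hom C W X. \<forall>g \<in> hom C X Y. \<forall>h \<in> hom C Y Z.
        cmp C h (cmp C g f) = cmp C (cmp C h g) f) \<and>
     (\<forall>X \<in> obj C. \<forall>Y \<in> obj C.
        mzero C X Y \<in> hom C X Y \<and>
        (\<forall>f \<in> hom C X Y. \<forall>g \<in> hom C X Y. madd C f g \<in> hom C X Y \<and> madd C f g = madd C g f) \<and>
        (\<forall>f \<in> hom C X Y. \<forall>g \<in> hom C X Y. \<forall>h \<in> hom C X Y.
           madd C (madd C f g) h = madd C f (madd C g h)) \<and>
        (\<forall>f \<in> hom C X Y. madd C (mzero C X Y) f = f \<and>
           mneg C f \<in> hom C X Y \<and> madd C (mneg C f) f = mzero C X Y)) \<and>
     (\<forall>X \<in> obj C. \<forall>Y \<in> obj C. \<forall>Z \<in> obj C.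
        \<forall>f \<in> hom C X Y. \<forall>f' \<in> hom C X Y. \<forall>g \<in> hom C Y Z. \<forall>g' \<in> hom C Y Z.
        cmp C (madd C g g') f = madd C (cmp C g f) (cmp C g' f) \<and>
        cmp C g (madd C f f') = madd C (cmp C g f) (cmp C g f')) \<and>
     (\<exists>Z. zero_obj C Z) \<and>
     (\<forall>X \<in> obj C. \<forall>Y \<in> obj C. \<exists>P i1 i2 p1 p2. is_biprod C X Y P i1 i2 p1 p2)"

definition shift_equiv :: "('o,'m,'x) tcat_scheme \<Rightarrow> bool" where
  "shift_equiv C \<longleftrightarrow>
     (\<forall>X \<in> obj C. sh C X \<in> obj C) \<and>
     (\<forall>X \<in> obj C. \<forall>Y \<in> obj C. bij_betw (shm C) (hom C X Y) (hom C (sh C X) (sh C Y))) \<and>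
     (\<forall>X \<in> obj C. shm C (ide C X) = ide C (sh C X)) \<and>
     (\<forall>X \<in> obj C. \<forall>Y \<in> obj C. \<forall>Z \<in> obj C. \<forall>f \<in> hom C X Y. \<forall>g \<in> hom C Y Z.
        shm C (cmp C g f) = cmp C (shm C g) (shm C f)) \<and>
     (\<forall>X \<in> obj C. \<forall>Y \<in> obj C. \<forall>f \<in> hom C X Y. \<forall>g \<in> hom C X Y.
        shm C (madd C f g) = madd C (shm C f) (shm C g)) \<and>
     (\<forall>Y \<in> obj C. \<exists>X \<in> obj C. isomorphic C (sh C X) Y)"

definition is_triangle :: "('o,'m,'x) tcat_scheme \<Rightarrow> 'o \<times> 'o \<times> 'o \<times> 'm \<times> 'm \<times> 'm \<Rightarrow> bool" where
  "is_triangle C t \<longleftrightarrow> (case t of (X, Y, Z, f, g, h) \<Rightarrow>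
     X \<in> obj C \<and> Y \<in> obj C \<and> Z \<in> obj C \<and>
     f \<in> hom C X Y \<and> g \<in> hom C Y Z \<and> h \<in> hom C Z (sh C X))"

definition tri_iso :: "('o,'m,'x) tcat_scheme \<Rightarrow> 'o \<times> 'o \<times> 'o \<times> 'm \<times> 'm \<times> 'm
    \<Rightarrow> 'o \<times> 'o \<times> 'o \<times> 'm \<times> 'm \<times> 'm \<Rightarrow> bool" where
  "tri_iso C t t' \<longleftrightarrow> (case t of (X, Y, Z, f, g, h) \<Rightarrow> case t' of (X', Y', Z', f', g', h') \<Rightarrow>
     (\<exists>u v w. iso_mor C X X' u \<and> iso_mor C Y Y' v \<and> iso_mor C Z Z' w \<and>
        cmp C v f = cmp C f' u \<and> cmp C w g = cmp C g' v \<and>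
        cmp C (shm C u) h = cmp C h' w))"

definition triangulated :: "('o,'m,'x) tcat_scheme \<Rightarrow> bool" where
  "triangulated C \<longleftrightarrow> additive_cat C \<and> shift_equiv C \<and>
     (\<forall>t \<in> dist C. is_triangle C t) \<and>
     \<comment> \<open>TR1\<close>
     (\<forall>t \<in> dist C. \<forall>t'. is_triangle C t' \<longrightarrow> tri_iso C t t' \<longrightarrow> t' \<in> dist C) \<and>
     (\<forall>X \<in> obj C. \<forall>Z. zero_obj C Z \<longrightarrow>
        (X, X, Z, ide C X, mzero C X Z, mzero C Z (sh C X)) \<in> dist C) \<and>
     (\<forall>X \<in> obj C. \<forall>Y \<in> obj C. \<forall>f \<in> hom C X Y. \<exists>Z g h. (X, Y, Z, f, g, h) \<in> dist C) \<and>
     \<comment> \<open>TR2\<close>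
     (\<forall>X Y Z f g h. is_triangle C (X, Y, Z, f, g, h) \<longrightarrow>
        ((X, Y, Z, f, g, h) \<in> dist C \<longleftrightarrow>
         (Y, Z, sh C X, g, h, mneg C (shm C f)) \<in> dist C)) \<and>
     \<comment> \<open>TR3\<close>
     (\<forall>X Y Z f g h X' Y' Z' f' g' h' u v.
        (X, Y, Z, f, g, h) \<in> dist C \<longrightarrow> (X', Y', Z', f', g', h') \<in> dist C \<longrightarrow>
        u \<in> hom C X X' \<longrightarrow> v \<in> hom C Y Y' \<longrightarrow> cmp C v f = cmp C f' u \<longrightarrow>
        (\<exists>w \<in> hom C Z Z'. cmp C w g = cmp C g' v \<and> cmp C (shm C u) h = cmp C h' w)) \<and>
     \<comment> \<open>TR4 (octahedral axiom)\<close>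
     (\<forall>X Y Z Z' X' Y' f g i i' j j' k k'.
        (X, Y, Z', f, i, i') \<in> dist C \<longrightarrow> (Y, Z, X', g, j, j') \<in> dist C \<longrightarrow>
        (X, Z, Y', cmp C g f, k, k') \<in> dist C \<longrightarrow>
        (\<exists>l m. (Z', Y', X', l, m, cmp C (shm C i) j') \<in> dist C \<and>
           cmp C l i = cmp C k g \<and> cmp C k' l = i' \<and>
           cmp C m k = j \<and> cmp C j' m = cmp C (shm C f) k'))"

text \<open>Subcategories: full (given by a class of objects), additive (contain a zero object,
closed under biproducts), closed under isomorphisms and direct summands.\<close>
definition subcat :: "('o,'m,'x) tcat_scheme \<Rightarrow> 'o set \<Rightarrow> bool" where
  "subcat C A \<longleftrightarrow> A \<subseteq> obj C \<and>
     (\<forall>X \<in> A. \<forall>Y. isomorphic C X Y \<longrightarrow> Y \<in> A) \<and>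
     (\<exists>Z \<in> A. zero_obj C Z) \<and>
     (\<forall>X Y P i1 i2 p1 p2. is_biprod C X Y P i1 i2 p1 p2 \<longrightarrow>
        (P \<in> A \<longleftrightarrow> X \<in> A \<and> Y \<in> A))"

definition shift_up :: "('o,'m,'x) tcat_scheme \<Rightarrow> 'o set \<Rightarrow> 'o set" where
  "shift_up C A = {Z \<in> obj C. \<exists>Y \<in> A. isomorphic C Z (sh C Y)}"

definition shift_down :: "('o,'m,'x) tcat_scheme \<Rightarrow> 'o set \<Rightarrow> 'o set" where
  "shift_down C A = {Z \<in> obj C. sh C Z \<in> A}"

definition ext1_zero :: "('o,'m,'x) tcat_scheme \<Rightarrow> 'o set \<Rightarrow> 'o set \<Rightarrow> bool" where
  "ext1_zero C A B \<longleftrightarrow> (\<forall>X \<in> A. \<forall>Y \<in> B. hom C X (sh C Y) = {mzero C X (sh C Y)})"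

definition star :: "('o,'m,'x) tcat_scheme \<Rightarrow> 'o set \<Rightarrow> 'o set \<Rightarrow> 'o set" where
  "star C M N = {Z \<in> obj C. \<exists>X \<in> M. \<exists>Y \<in> N. \<exists>f g h. (X, Z, Y, f, g, h) \<in> dist C}"

definition cotorsion_pair :: "('o,'m,'x) tcat_scheme \<Rightarrow> 'o set \<Rightarrow> 'o set \<Rightarrow> bool" where
  "cotorsion_pair C U V \<longleftrightarrow> subcat C U \<and> subcat C V \<and> ext1_zero C U V \<and>
     obj C = star C U (shift_up C V)"

definition twin_cotorsion_pair :: "('o,'m,'x) tcat_scheme \<Rightarrow> 'o set \<Rightarrow> 'o set
    \<Rightarrow> 'o set \<Rightarrow> 'o set \<Rightarrow> bool" where
  "twin_cotorsion_pair C S T U V \<longleftrightarrow> cotorsion_pair C S T \<and> cotorsion_pair C U V \<and>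
     ext1_zero C S V"

definition Cminus :: "('o,'m,'x) tcat_scheme \<Rightarrow> 'o set \<Rightarrow> 'o set \<Rightarrow> 'o set \<Rightarrow> 'o set" where
  "Cminus C S T U = star C (shift_down C S) (T \<inter> U)"

definition Cplus :: "('o,'m,'x) tcat_scheme \<Rightarrow> 'o set \<Rightarrow> 'o set \<Rightarrow> 'o set \<Rightarrow> 'o set" where
  "Cplus C T U V = star C (T \<inter> U) (shift_up C V)"

definition heart :: "('o,'m,'x) tcat_scheme \<Rightarrow> 'o set \<Rightarrow> 'o set \<Rightarrow> 'o set \<Rightarrow> 'o set \<Rightarrow> 'o set" where
  "heart C S T U V = Cplus C T U V \<inter> Cminus C S T U"

end

theory Submission
  imports Defs
begin

text \<open>Applying the octahedral axiom to X \<rightarrow> T \<rightarrow> V[1] puts the cocone K of the composite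
  into a triangle X0 \<rightarrow> K \<rightarrow> U \<rightarrow> X0[1], with U the cocone of T \<rightarrow> V[1]. For S in \<S>, the
  exact sequence Hom(S, V[1]) \<rightarrow> Hom(S, U[1]) \<rightarrow> Hom(S, T[1]) has vanishing ends, so U is
  Ext-orthogonal to \<S>, i.e. U \<in> \<T> \<inter> \<U>, and K lies in \<S>[-1] * (\<T> \<inter> \<U>).

  For the second part write K as an extension UK \<rightarrow> K \<rightarrow> ZK of an object of \<V>[1] by UK in \<U>,
  and X as an extension W' \<rightarrow> X \<rightarrow> Z' with W' in \<T> \<inter> \<U>, Z' in \<V>[1]. The composite
  UK \<rightarrow> K \<rightarrow> X \<rightarrow> Z' vanishes since Ext^1(\<U>, \<V>) = 0, so a map S \<rightarrow> UK[1] pushed to X[1]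
  factors through W'[1] and is zero; pushed to K[1] it then factors through V[1] and is zero;
  so it factors through ZK and is zero. Thus UK \<in> \<T> and K lies in (\<T> \<inter> \<U>) * \<V>[1].\<close>

locale triangulated_category =
  fixes C :: "('o, 'm) tcat"
  assumes triangulated: "triangulated C"
begin

subsection \<open>Additive structure\<close>

lemma additive_catD:
  "\<forall>X Y. X \<notin> obj C \<or> Y \<notin> obj C \<longrightarrow> hom C X Y = {}"
  "\<forall>X \<in> obj C. ide C X \<in> hom C X X"
  "\<forall>X \<in> obj C. \<forall>Y \<in> obj C. \<forall>Z \<in> obj C. \<forall>f \<in> hom C X Y. \<forall>g \<in> hom C Y Z.
     cmp C g f \<in> hom C X Z"
  "\<forall>X \<in> obj C. \<forall>Y \<in> obj C. \<forall>f \<in> hom C X Y.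
     cmp C f (ide C X) = f \<and> cmp C (ide C Y) f = f"
  "\<forall>W \<in> obj C. \<forall>X \<in> obj C. \<forall>Y \<in> obj C. \<forall>Z \<in> obj C.
     \<forall>f \<in> hom C W X. \<forall>g \<in> hom C X Y. \<forall>h \<in> hom C Y Z.
     cmp C h (cmp C g f) = cmp C (cmp C h g) f"
  "\<forall>X \<in> obj C. \<forall>Y \<in> obj C.
     mzero C X Y \<in> hom C X Y \<and>
     (\<forall>f \<in> hom C X Y. \<forall>g \<in> hom C X Y. madd C f g \<in> hom C X Y \<and> madd C f g = madd C g f) \<and>
     (\<forall>f \<in> hom C X Y. \<forall>g \<in> hom C X Y. \<forall>h \<in> hom C X Y.
        madd C (madd C f g) h = madd C f (madd C g h)) \<and>
     (\<forall>f \<in> hom C X Y. madd C (mzero C X Y) f = f \<and>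
        mneg C f \<in> hom C X Y \<and> madd C (mneg C f) f = mzero C X Y)"
  "\<forall>X \<in> obj C. \<forall>Y \<in> obj C. \<forall>Z \<in> obj C.
     \<forall>f \<in> hom C X Y. \<forall>f' \<in> hom C X Y. \<forall>g \<in> hom C Y Z. \<forall>g' \<in> hom C Y Z.
     cmp C (madd C g g') f = madd C (cmp C g f) (cmp C g' f) \<and>
     cmp C g (madd C f f') = madd C (cmp C g f) (cmp C g f')"
  "\<exists>Z. zero_obj C Z"
  using triangulated unfolding triangulated_def additive_cat_def by - (elim conjE; assumption)+

lemma hom_objs: "f \<in> hom C X Y \<Longrightarrow> X \<in> obj C \<and> Y \<in> obj C"
  using additive_catD(1) by blast

lemma ide_in_hom [simp, intro]: "X \<in> obj C \<Longrightarrow> ide C X \<in> hom C X X"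
  using additive_catD(2) by blast

lemma cmp_in_hom [intro]: "f \<in> hom C X Y \<Longrightarrow> g \<in> hom C Y Z \<Longrightarrow> cmp C g f \<in> hom C X Z"
  using additive_catD(3) hom_objs by meson

lemma cmp_ide_right [simp]: "f \<in> hom C X Y \<Longrightarrow> cmp C f (ide C X) = f"
  using additive_catD(4) hom_objs by meson

lemma cmp_ide_left [simp]: "f \<in> hom C X Y \<Longrightarrow> cmp C (ide C Y) f = f"
  using additive_catD(4) hom_objs by meson

lemma cmp_assoc:
  "f \<in> hom C W X \<Longrightarrow> g \<in> hom C X Y \<Longrightarrow> h \<in> hom C Y Z \<Longrightarrow>
   cmp C (cmp C h g) f = cmp C h (cmp C g f)"
  using additive_catD(5) hom_objs by metis

lemma mzero_in_hom [simp, intro]: "X \<in> obj C \<Longrightarrow> Y \<in> obj C \<Longrightarrow> mzero C X Y \<in> hom C X Y"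
  using additive_catD(6) by blast

lemma madd_in_hom [intro]: "f \<in> hom C X Y \<Longrightarrow> g \<in> hom C X Y \<Longrightarrow> madd C f g \<in> hom C X Y"
  using additive_catD(6) hom_objs by meson

lemma madd_commute: "f \<in> hom C X Y \<Longrightarrow> g \<in> hom C X Y \<Longrightarrow> madd C f g = madd C g f"
  using additive_catD(6) hom_objs by meson

lemma madd_assoc:
  "f \<in> hom C X Y \<Longrightarrow> g \<in> hom C X Y \<Longrightarrow> h \<in> hom C X Y \<Longrightarrow>
   madd C (madd C f g) h = madd C f (madd C g h)"
  using additive_catD(6) hom_objs by meson

lemma madd_mzero_left [simp]: "f \<in> hom C X Y \<Longrightarrow> madd C (mzero C X Y) f = f"
  using additive_catD(6) hom_objs by meson

lemma mneg_in_hom [intro]: "f \<in> hom C X Y \<Longrightarrow> mneg C f \<in> hom C X Y"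
  using additive_catD(6) hom_objs by meson

lemma madd_mneg_left [simp]: "f \<in> hom C X Y \<Longrightarrow> madd C (mneg C f) f = mzero C X Y"
  using additive_catD(6) hom_objs by meson

lemma cmp_madd_left:
  "f \<in> hom C X Y \<Longrightarrow> g \<in> hom C Y Z \<Longrightarrow> g' \<in> hom C Y Z \<Longrightarrow>
   cmp C (madd C g g') f = madd C (cmp C g f) (cmp C g' f)"
  using additive_catD(7) hom_objs by meson

lemma cmp_madd_right:
  "f \<in> hom C X Y \<Longrightarrow> f' \<in> hom C X Y \<Longrightarrow> g \<in> hom C Y Z \<Longrightarrow>
   cmp C g (madd C f f') = madd C (cmp C g f) (cmp C g f')"
  using additive_catD(7) hom_objs by meson

lemma madd_mzero_right [simp]: "f \<in> hom C X Y \<Longrightarrow> madd C f (mzero C X Y) = f"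
  by (metis madd_commute hom_objs madd_mzero_left mzero_in_hom)

lemma madd_mneg_right [simp]: "f \<in> hom C X Y \<Longrightarrow> madd C f (mneg C f) = mzero C X Y"
  by (metis madd_commute madd_mneg_left mneg_in_hom)

lemma madd_left_cancel:
  assumes a: "a \<in> hom C X Y" and b: "b \<in> hom C X Y" and c: "c \<in> hom C X Y"
    and e: "madd C a b = madd C a c"
  shows "b = c"
proof -
  have na: "mneg C a \<in> hom C X Y" using a ..
  have "b = madd C (madd C (mneg C a) a) b" using a b by simp
  also have "\<dots> = madd C (mneg C a) (madd C a c)" using madd_assoc[OF na a b] e by simp
  also have "\<dots> = madd C (madd C (mneg C a) a) c" using madd_assoc[OF na a c] by simp
  also have "\<dots> = c" using a c by simp
  finally show ?thesis .
qed

lemma idempotent_madd_eq_mzero: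
  assumes a: "a \<in> hom C X Y" and e: "madd C a a = a"
  shows "a = mzero C X Y"
  using madd_left_cancel[OF a a] a e hom_objs by (metis madd_mzero_right mzero_in_hom)

lemma mneg_unique:
  assumes a: "a \<in> hom C X Y" and b: "b \<in> hom C X Y" and e: "madd C a b = mzero C X Y"
  shows "b = mneg C a"
  using madd_left_cancel[OF a b mneg_in_hom[OF a]] e a by simp

lemma mneg_mneg [simp]: "a \<in> hom C X Y \<Longrightarrow> mneg C (mneg C a) = a"
  using mneg_unique[OF mneg_in_hom] madd_mneg_left by metis

lemma mneg_inj: "a \<in> hom C X Y \<Longrightarrow> b \<in> hom C X Y \<Longrightarrow> mneg C a = mneg C b \<Longrightarrow> a = b"
  by (metis mneg_mneg)

lemma eq_if_madd_mneg_eq_mzero: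
  assumes a: "a \<in> hom C X Y" and b: "b \<in> hom C X Y" and e: "madd C a (mneg C b) = mzero C X Y"
  shows "a = b"
  using mneg_unique[OF mneg_in_hom[OF b] a] e madd_commute[OF a mneg_in_hom[OF b]] b by simp

lemma mneg_mzero [simp]: "X \<in> obj C \<Longrightarrow> Y \<in> obj C \<Longrightarrow> mneg C (mzero C X Y) = mzero C X Y"
  using mneg_unique[OF mzero_in_hom mzero_in_hom] by simp

lemma cmp_mzero_right [simp]:
  assumes g: "g \<in> hom C Y Z" and X: "X \<in> obj C"
  shows "cmp C g (mzero C X Y) = mzero C X Z"
proof (rule idempotent_madd_eq_mzero)
  have z: "mzero C X Y \<in> hom C X Y" using X g hom_objs by blast
  then show "cmp C g (mzero C X Y) \<in> hom C X Z" using g ..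
  show "madd C (cmp C g (mzero C X Y)) (cmp C g (mzero C X Y)) = cmp C g (mzero C X Y)"
    using cmp_madd_right[OF z z g] z by simp
qed

lemma cmp_mzero_left [simp]:
  assumes f: "f \<in> hom C X Y" and Z: "Z \<in> obj C"
  shows "cmp C (mzero C Y Z) f = mzero C X Z"
proof (rule idempotent_madd_eq_mzero)
  have z: "mzero C Y Z \<in> hom C Y Z" using Z f hom_objs by blast
  show "cmp C (mzero C Y Z) f \<in> hom C X Z" using f z ..
  show "madd C (cmp C (mzero C Y Z) f) (cmp C (mzero C Y Z) f) = cmp C (mzero C Y Z) f"
    using cmp_madd_left[OF f z z] z by simp
qed

lemma cmp_mneg_left:
  assumes f: "f \<in> hom C X Y" and g: "g \<in> hom C Y Z"
  shows "cmp C (mneg C g) f = mneg C (cmp C g f)"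
proof (rule mneg_unique)
  show "cmp C g f \<in> hom C X Z" "cmp C (mneg C g) f \<in> hom C X Z" using f g by blast+
  show "madd C (cmp C g f) (cmp C (mneg C g) f) = mzero C X Z"
    using cmp_madd_left[OF f g mneg_in_hom[OF g], symmetric] f g hom_objs by simp
qed

lemma cmp_mneg_right:
  assumes f: "f \<in> hom C X Y" and g: "g \<in> hom C Y Z"
  shows "cmp C g (mneg C f) = mneg C (cmp C g f)"
proof (rule mneg_unique)
  show "cmp C g f \<in> hom C X Z" "cmp C g (mneg C f) \<in> hom C X Z" using f g by blast+
  show "madd C (cmp C g f) (cmp C g (mneg C f)) = mzero C X Z"
    using cmp_madd_right[OF f mneg_in_hom[OF f] g, symmetric] f g hom_objs by simp
qed

lemma cmp_mneg_mneg:
  assumes f: "f \<in> hom C X Y" and g: "g \<in> hom C Y Z"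
  shows "cmp C (mneg C g) (mneg C f) = cmp C g f"
  using cmp_mneg_left[OF mneg_in_hom[OF f] g] cmp_mneg_right[OF f g] mneg_mneg[OF cmp_in_hom[OF f g]]
  by simp

lemma cmp_mneg_left_eq_mzero:
  "f \<in> hom C X Y \<Longrightarrow> g \<in> hom C Y Z \<Longrightarrow> cmp C g f = mzero C X Z \<Longrightarrow>
   cmp C (mneg C g) f = mzero C X Z"
  by (simp add: cmp_mneg_left hom_objs)

lemma shift_equivD:
  "\<forall>X \<in> obj C. sh C X \<in> obj C"
  "\<forall>X \<in> obj C. \<forall>Y \<in> obj C. bij_betw (shm C) (hom C X Y) (hom C (sh C X) (sh C Y))"
  "\<forall>X \<in> obj C. shm C (ide C X) = ide C (sh C X)"
  "\<forall>X \<in> obj C. \<forall>Y \<in> obj C. \<forall>Z \<in> obj C. \<forall>f \<in> hom C X Y. \<forall>g \<in> hom C Y Z.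
     shm C (cmp C g f) = cmp C (shm C g) (shm C f)"
  "\<forall>X \<in> obj C. \<forall>Y \<in> obj C. \<forall>f \<in> hom C X Y. \<forall>g \<in> hom C X Y.
     shm C (madd C f g) = madd C (shm C f) (shm C g)"
  "\<forall>Y \<in> obj C. \<exists>X \<in> obj C. isomorphic C (sh C X) Y"
  using triangulated unfolding triangulated_def shift_equiv_def by - (elim conjE; assumption)+

lemma sh_in_obj [simp, intro]: "X \<in> obj C \<Longrightarrow> sh C X \<in> obj C"
  using shift_equivD(1) by blast

lemma shm_bij: "X \<in> obj C \<Longrightarrow> Y \<in> obj C \<Longrightarrow> bij_betw (shm C) (hom C X Y) (hom C (sh C X) (sh C Y))"
  using shift_equivD(2) by blast

lemma shm_in_hom [intro]: "f \<in> hom C X Y \<Longrightarrow> shm C f \<in> hom C (sh C X) (sh C Y)"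
  using bij_betw_apply[OF shm_bij] hom_objs by blast

lemma shm_inj: "f \<in> hom C X Y \<Longrightarrow> g \<in> hom C X Y \<Longrightarrow> shm C f = shm C g \<Longrightarrow> f = g"
  using inj_onD[OF bij_betw_imp_inj_on[OF shm_bij]] hom_objs by blast

lemma shm_surjE:
  assumes "X \<in> obj C" "Y \<in> obj C" "g \<in> hom C (sh C X) (sh C Y)"
  obtains f where "f \<in> hom C X Y" "g = shm C f"
  using assms bij_betw_imp_surj_on[OF shm_bij[of X Y]] by (metis imageE)

lemma shm_ide [simp]: "X \<in> obj C \<Longrightarrow> shm C (ide C X) = ide C (sh C X)"
  using shift_equivD(3) by blast

lemma shm_cmp: "f \<in> hom C X Y \<Longrightarrow> g \<in> hom C Y Z \<Longrightarrow> shm C (cmp C g f) = cmp C (shm C g) (shm C f)"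
  using shift_equivD(4) hom_objs by meson

lemma shm_madd: "f \<in> hom C X Y \<Longrightarrow> g \<in> hom C X Y \<Longrightarrow> shm C (madd C f g) = madd C (shm C f) (shm C g)"
  using shift_equivD(5) hom_objs by meson

lemma sh_essentially_surj: "Y \<in> obj C \<Longrightarrow> \<exists>X \<in> obj C. isomorphic C (sh C X) Y"
  using shift_equivD(6) by blast

lemma shm_mzero [simp]:
  assumes "X \<in> obj C" "Y \<in> obj C"
  shows "shm C (mzero C X Y) = mzero C (sh C X) (sh C Y)"
  using idempotent_madd_eq_mzero[OF shm_in_hom[OF mzero_in_hom[OF assms]]]
    shm_madd[OF mzero_in_hom[OF assms] mzero_in_hom[OF assms]] assms by simp

lemma shm_mneg:
  assumes f: "f \<in> hom C X Y"
  shows "shm C (mneg C f) = mneg C (shm C f)"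
proof (rule mneg_unique)
  show "shm C f \<in> hom C (sh C X) (sh C Y)" "shm C (mneg C f) \<in> hom C (sh C X) (sh C Y)"
    using f by blast+
  show "madd C (shm C f) (shm C (mneg C f)) = mzero C (sh C X) (sh C Y)"
    using shm_madd[OF f mneg_in_hom[OF f], symmetric] f hom_objs by simp
qed

subsection \<open>Distinguished triangles\<close>

lemma triangulatedD:
  "\<forall>t \<in> dist C. is_triangle C t"
  "\<forall>t \<in> dist C. \<forall>t'. is_triangle C t' \<longrightarrow> tri_iso C t t' \<longrightarrow> t' \<in> dist C"
  "\<forall>X \<in> obj C. \<forall>Z. zero_obj C Z \<longrightarrow>
     (X, X, Z, ide C X, mzero C X Z, mzero C Z (sh C X)) \<in> dist C"
  "\<forall>X Y Z f g h. is_triangle C (X, Y, Z, f, g, h) \<longrightarrow>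
     ((X, Y, Z, f, g, h) \<in> dist C \<longleftrightarrow> (Y, Z, sh C X, g, h, mneg C (shm C f)) \<in> dist C)"
  "\<forall>X Y Z f g h X' Y' Z' f' g' h' u v.
     (X, Y, Z, f, g, h) \<in> dist C \<longrightarrow> (X', Y', Z', f', g', h') \<in> dist C \<longrightarrow>
     u \<in> hom C X X' \<longrightarrow> v \<in> hom C Y Y' \<longrightarrow> cmp C v f = cmp C f' u \<longrightarrow>
     (\<exists>w \<in> hom C Z Z'. cmp C w g = cmp C g' v \<and> cmp C (shm C u) h = cmp C h' w)"
  "\<forall>X Y Z Z' X' Y' f g i i' j j' k k'.
     (X, Y, Z', f, i, i') \<in> dist C \<longrightarrow> (Y, Z, X', g, j, j') \<in> dist C \<longrightarrow>
     (X, Z, Y', cmp C g f, k, k') \<in> dist C \<longrightarrow>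
     (\<exists>l m. (Z', Y', X', l, m, cmp C (shm C i) j') \<in> dist C \<and>
        cmp C l i = cmp C k g \<and> cmp C k' l = i' \<and>
        cmp C m k = j \<and> cmp C j' m = cmp C (shm C f) k')"
  using triangulated unfolding triangulated_def by - (elim conjE; assumption)+

lemma dist_triangle:
  assumes "(A, B, Z, f, g, h) \<in> dist C"
  shows "A \<in> obj C" "B \<in> obj C" "Z \<in> obj C"
    and "f \<in> hom C A B" "g \<in> hom C B Z" "h \<in> hom C Z (sh C A)"
  using assms triangulatedD(1) unfolding is_triangle_def by fastforce+

lemma dist_rotate_iff:
  assumes "f \<in> hom C A B" "g \<in> hom C B Z" "h \<in> hom C Z (sh C A)"
  shows "(A, B, Z, f, g, h) \<in> dist C \<longleftrightarrow> (B, Z, sh C A, g, h, mneg C (shm C f)) \<in> dist C"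
proof -
  have "is_triangle C (A, B, Z, f, g, h)" unfolding is_triangle_def using assms hom_objs by blast
  then show ?thesis using triangulatedD(4) by blast
qed

lemma dist_rotate:
  assumes d: "(A, B, Z, f, g, h) \<in> dist C"
  shows "(B, Z, sh C A, g, h, mneg C (shm C f)) \<in> dist C"
  using dist_rotate_iff[OF dist_triangle(4-6)[OF d]] d by blast

lemma dist_unrotate:
  assumes d: "(B, Z, sh C A, g, h, mneg C (shm C f)) \<in> dist C" and f: "f \<in> hom C A B"
  shows "(A, B, Z, f, g, h) \<in> dist C"
  using dist_rotate_iff[OF f dist_triangle(4,5)[OF d]] d by blast

lemma dist_rotate_shift:
  "(A, B, Z, f, g, h) \<in> dist C \<Longrightarrow>
   (sh C A, sh C B, sh C Z, mneg C (shm C f), mneg C (shm C g), mneg C (shm C h)) \<in> dist C"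
  by (intro dist_rotate)

lemma dist_iso_closed:
  assumes d: "(A, B, Z, f, g, h) \<in> dist C"
    and f': "f' \<in> hom C A' B'" and g': "g' \<in> hom C B' Z'" and h': "h' \<in> hom C Z' (sh C A')"
    and "iso_mor C A A' u" "iso_mor C B B' v" "iso_mor C Z Z' w"
    and "cmp C v f = cmp C f' u" "cmp C w g = cmp C g' v" "cmp C (shm C u) h = cmp C h' w"
  shows "(A', B', Z', f', g', h') \<in> dist C"
proof -
  have "is_triangle C (A', B', Z', f', g', h')" unfolding is_triangle_def
    using f' g' h' hom_objs by auto
  moreover have "tri_iso C (A, B, Z, f, g, h) (A', B', Z', f', g', h')"
    unfolding tri_iso_def using assms by auto
  ultimately show ?thesis using d triangulatedD(2) by blast
qed

lemma dist_trivial: "X \<in> obj C \<Longrightarrow> zero_obj C Z \<Longrightarrow>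
    (X, X, Z, ide C X, mzero C X Z, mzero C Z (sh C X)) \<in> dist C"
  using triangulatedD(3) by blast

lemma dist_morphism:
  assumes "(A, B, Z, f, g, h) \<in> dist C" "(A', B', Z', f', g', h') \<in> dist C"
    and "u \<in> hom C A A'" "v \<in> hom C B B'" "cmp C v f = cmp C f' u"
  obtains w where "w \<in> hom C Z Z'" "cmp C w g = cmp C g' v" "cmp C (shm C u) h = cmp C h' w"
  using triangulatedD(5) assms that by blast

lemma dist_octahedral:
  assumes "(X, Y, Z', f, i, i') \<in> dist C" "(Y, Z, X', g, j, j') \<in> dist C"
    and "(X, Z, Y', cmp C g f, k, k') \<in> dist C"
  obtains l m where "(Z', Y', X', l, m, cmp C (shm C i) j') \<in> dist C"
  using triangulatedD(6) assms by blast

lemma dist_cmp_eq_mzero: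
  assumes d: "(A, B, Z, f, g, h) \<in> dist C"
  shows "cmp C g f = mzero C A Z"
proof -
  obtain Z0 where "zero_obj C Z0" using additive_catD(8) by blast
  moreover note t = dist_triangle[OF d]
  ultimately have "(A, A, Z0, ide C A, mzero C A Z0, mzero C Z0 (sh C A)) \<in> dist C"
    by (intro dist_trivial)
  then obtain w where "w \<in> hom C Z0 Z" "cmp C w (mzero C A Z0) = cmp C g (cmp C f (ide C A))"
    using dist_morphism[OF _ d ide_in_hom[OF t(1)] t(4)] t by (metis cmp_ide_left cmp_ide_right)
  then show ?thesis using t by simp
qed

lemma zero_objD:
  "zero_obj C Z \<Longrightarrow> Z \<in> obj C"
  "zero_obj C Z \<Longrightarrow> X \<in> obj C \<Longrightarrow> hom C Z X = {mzero C Z X}"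
  "zero_obj C Z \<Longrightarrow> X \<in> obj C \<Longrightarrow> hom C X Z = {mzero C X Z}"
  unfolding zero_obj_def by blast+

lemma hom_singleton_iso_target:
  assumes i: "iso_mor C Z Z' p" and z: "hom C W Z' = {mzero C W Z'}" and W: "W \<in> obj C"
  shows "hom C W Z = {mzero C W Z}"
proof -
  obtain q where q: "q \<in> hom C Z' Z" "cmp C q p = ide C Z" and p: "p \<in> hom C Z Z'"
    using i unfolding iso_mor_def by blast
  have "psi = mzero C W Z" if psi: "psi \<in> hom C W Z" for psi
  proof -
    have "psi = cmp C q (cmp C p psi)" using cmp_assoc[OF psi p q(1)] q psi by simp
    also have "cmp C p psi = mzero C W Z'" using z cmp_in_hom[OF psi p] by blast
    finally show ?thesis using q(1) W by simp
  qed
  then show ?thesis using W p hom_objs by blast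
qed

lemma hom_singleton_iso_source:
  assumes i: "iso_mor C Z Z' p" and z: "hom C Z' W = {mzero C Z' W}" and W: "W \<in> obj C"
  shows "hom C Z W = {mzero C Z W}"
proof -
  obtain q where q: "q \<in> hom C Z' Z" "cmp C q p = ide C Z" and p: "p \<in> hom C Z Z'"
    using i unfolding iso_mor_def by blast
  have "phi = mzero C Z W" if phi: "phi \<in> hom C Z W" for phi
  proof -
    have "phi = cmp C (cmp C phi q) p" using cmp_assoc[OF p q(1) phi] q phi by simp
    also have "cmp C phi q = mzero C Z' W" using z cmp_in_hom[OF q(1) phi] by blast
    finally show ?thesis using p W by simp
  qed
  then show ?thesis using W p hom_objs by blast
qed

lemma zero_obj_iso: "zero_obj C Z' \<Longrightarrow> iso_mor C Z Z' p \<Longrightarrow> zero_obj C Z"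
  unfolding zero_obj_def using hom_singleton_iso_target hom_singleton_iso_source
  by (metis iso_mor_def hom_objs)

text \<open>The shift is only essentially surjective, so a desuspension of a zero object has to
  be found by transport along an isomorphism.\<close>

lemma dist_trivial_left:
  assumes W: "W \<in> obj C"
  obtains Z' where "Z' \<in> obj C" "(Z', W, W, mzero C Z' W, ide C W, mzero C W (sh C Z')) \<in> dist C"
proof -
  obtain Z where z: "zero_obj C Z" using additive_catD(8) by blast
  obtain Z' p where Z': "Z' \<in> obj C" "iso_mor C (sh C Z') Z p"
    using sh_essentially_surj[OF zero_objD(1)[OF z]] unfolding isomorphic_def by blast
  then have "(W, W, sh C Z', ide C W, mzero C W (sh C Z'), mzero C (sh C Z') (sh C W)) \<in> dist C"
    using dist_trivial W zero_obj_iso z by blast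
  then have "(Z', W, W, mzero C Z' W, ide C W, mzero C W (sh C Z')) \<in> dist C"
    using dist_unrotate W Z' by simp
  with Z' that show ?thesis by blast
qed

lemma dist_factor_fst:
  assumes d: "(A, B, Z, f, g, h) \<in> dist C" and psi: "psi \<in> hom C W B"
    and e: "cmp C g psi = mzero C W Z"
  obtains chi where "chi \<in> hom C W A" "psi = cmp C f chi"
proof -
  obtain Z0 where z: "zero_obj C Z0" using additive_catD(8) by blast
  note t = dist_triangle[OF d]
  have Wo: "W \<in> obj C" and Z0: "Z0 \<in> obj C" using psi hom_objs zero_objD(1)[OF z] by blast+
  have r1: "(W, Z0, sh C W, mzero C W Z0, mzero C Z0 (sh C W), mneg C (shm C (ide C W))) \<in> dist C"
    using dist_rotate[OF dist_trivial[OF Wo z]] .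
  have "cmp C (mzero C Z0 Z) (mzero C W Z0) = cmp C g psi" using e Wo Z0 t by simp
  then obtain w where w: "w \<in> hom C (sh C W) (sh C A)"
    "cmp C (shm C psi) (mneg C (shm C (ide C W))) = cmp C (mneg C (shm C f)) w"
    using dist_morphism[OF r1 dist_rotate[OF d] psi mzero_in_hom[OF Z0 t(3)]] by blast
  obtain chi where chi: "chi \<in> hom C W A" "w = shm C chi" using shm_surjE[OF Wo t(1) w(1)] .
  have "mneg C (shm C psi) = cmp C (shm C psi) (mneg C (shm C (ide C W)))"
    using cmp_mneg_right[OF ide_in_hom shm_in_hom[OF psi]] cmp_ide_right[OF shm_in_hom[OF psi]] Wo
    by simp
  also have "\<dots> = mneg C (shm C (cmp C f chi))"
    using w(2) chi cmp_mneg_left[OF shm_in_hom[OF chi(1)] shm_in_hom[OF t(4)]] shm_cmp[OF chi(1) t(4)]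
    by simp
  finally have "mneg C (shm C psi) = mneg C (shm C (cmp C f chi))" .
  then have "psi = cmp C f chi" using mneg_inj shm_inj psi chi(1) t(4) by blast
  with chi that show ?thesis by blast
qed

lemma dist_factor_snd:
  assumes d: "(A, B, Z, f, g, h) \<in> dist C" and phi: "phi \<in> hom C B W"
    and e: "cmp C phi f = mzero C A W"
  obtains chi where "chi \<in> hom C Z W" "phi = cmp C chi g"
proof -
  note t = dist_triangle[OF d]
  have Wo: "W \<in> obj C" using phi hom_objs by blast
  obtain Z' where Z': "Z' \<in> obj C" "(Z', W, W, mzero C Z' W, ide C W, mzero C W (sh C Z')) \<in> dist C"
    using dist_trivial_left[OF Wo] .
  have "cmp C phi f = cmp C (mzero C Z' W) (mzero C A Z')"
    using e cmp_mzero_left[OF mzero_in_hom[OF t(1) Z'(1)] Wo] by simp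
  then obtain w where "w \<in> hom C Z W" "cmp C w g = cmp C (ide C W) phi"
    using dist_morphism[OF d Z'(2) mzero_in_hom[OF t(1) Z'(1)] phi] by blast
  with phi that show ?thesis by simp
qed

lemma dist_hom_eq_mzero:
  assumes d: "(A, B, Z, f, g, h) \<in> dist C" and z: "hom C W A = {mzero C W A}"
    and psi: "psi \<in> hom C W B" and e: "cmp C g psi = mzero C W Z"
  shows "psi = mzero C W B"
proof -
  obtain chi where "chi \<in> hom C W A" "psi = cmp C f chi" using dist_factor_fst[OF d psi e] .
  then show ?thesis using z dist_triangle(4)[OF d] psi hom_objs by auto
qed

lemma dist_hom_singleton_middle:
  assumes d: "(A, B, Z, f, g, h) \<in> dist C" and W: "W \<in> obj C"
    and zA: "hom C W A = {mzero C W A}" and zZ: "hom C W Z = {mzero C W Z}"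
  shows "hom C W B = {mzero C W B}"
proof -
  have "psi = mzero C W B" if psi: "psi \<in> hom C W B" for psi
    using dist_hom_eq_mzero[OF d zA psi] zZ cmp_in_hom[OF psi dist_triangle(5)[OF d]] by blast
  then show ?thesis using W dist_triangle(2)[OF d] by blast
qed

lemma dist_shift_hom_eq_mzero:
  assumes d: "(A, B, Z, f, g, h) \<in> dist C" and z: "hom C W (sh C A) = {mzero C W (sh C A)}"
    and psi: "psi \<in> hom C W (sh C B)" and e: "cmp C (shm C g) psi = mzero C W (sh C Z)"
  shows "psi = mzero C W (sh C B)"
  using dist_hom_eq_mzero[OF dist_rotate_shift[OF d] z psi]
    cmp_mneg_left_eq_mzero[OF psi shm_in_hom[OF dist_triangle(5)[OF d]] e] .

lemma dist_zero_conn_epi: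
  assumes d: "(A, B, Z, f, g, mzero C Z (sh C A)) \<in> dist C"
    and p1: "p1 \<in> hom C Z W" and p2: "p2 \<in> hom C Z W" and e: "cmp C p1 g = cmp C p2 g"
  shows "p1 = p2"
proof (rule eq_if_madd_mneg_eq_mzero[OF p1 p2])
  note t = dist_triangle[OF d]
  have W: "W \<in> obj C" using p1 hom_objs by blast
  have dd: "madd C p1 (mneg C p2) \<in> hom C Z W" using p1 p2 by blast
  have "cmp C (madd C p1 (mneg C p2)) g = madd C (cmp C p1 g) (mneg C (cmp C p2 g))"
    using cmp_madd_left[OF t(5) p1 mneg_in_hom[OF p2]] cmp_mneg_left[OF t(5) p2] by simp
  also have "\<dots> = mzero C B W" using e cmp_in_hom[OF t(5) p2] by simp
  finally obtain chi where "chi \<in> hom C (sh C A) W"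
     "madd C p1 (mneg C p2) = cmp C chi (mzero C Z (sh C A))"
    using dist_factor_snd[OF dist_rotate[OF d] dd] by blast
  then show "madd C p1 (mneg C p2) = mzero C Z W" using t W by simp
qed

lemma dist_zero_conn_retraction:
  assumes d: "(A, B, Z, f, g, mzero C Z (sh C A)) \<in> dist C"
  obtains r where "r \<in> hom C B A" "cmp C r f = ide C A"
proof -
  note t = dist_triangle[OF d]
  have sA: "sh C A \<in> obj C" using t by blast
  have "cmp C (ide C (sh C A)) (mzero C Z (sh C A)) = mzero C Z (sh C A)" using t by simp
  then obtain chi where chi: "chi \<in> hom C (sh C B) (sh C A)"
    "ide C (sh C A) = cmp C chi (mneg C (shm C f))"
    using dist_factor_snd[OF dist_rotate[OF dist_rotate[OF d]] ide_in_hom[OF sA]] by blast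
  obtain r' where r': "r' \<in> hom C B A" "chi = shm C r'" using shm_surjE[OF t(2) t(1) chi(1)] .
  have r: "mneg C r' \<in> hom C B A" using r' by blast
  have "shm C (cmp C (mneg C r') f) = cmp C chi (mneg C (shm C f))"
    using shm_cmp[OF t(4) r] shm_mneg[OF r'(1)] cmp_mneg_mneg[OF shm_in_hom[OF t(4)] shm_in_hom[OF r'(1)]] r'
    by (metis cmp_mneg_left cmp_mneg_right shm_in_hom t(4))
  also have "\<dots> = shm C (ide C A)" using chi t by simp
  finally have "cmp C (mneg C r') f = ide C A" using shm_inj cmp_in_hom[OF t(4) r] t(1) by blast
  with r that show ?thesis by blast
qed

lemma dist_split:
  assumes d: "(A, B, Z, f, g, mzero C Z (sh C A)) \<in> dist C"
  obtains q r where "is_biprod C A Z B f q r g"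
proof -
  note t = dist_triangle[OF d]
  obtain r where r: "r \<in> hom C B A" "cmp C r f = ide C A" using dist_zero_conn_retraction[OF d] .
  have fr: "cmp C f r \<in> hom C B B" using r t by blast
  define e where "e = madd C (ide C B) (mneg C (cmp C f r))"
  have e: "e \<in> hom C B B" using e_def fr t by blast
  have frf: "cmp C (cmp C f r) f = f" using cmp_assoc[OF t(4) r(1) t(4)] r t by simp
  have "cmp C e f = madd C f (mneg C f)"
    using cmp_madd_left[OF t(4) ide_in_hom mneg_in_hom[OF fr]] cmp_mneg_left[OF t(4) fr] frf t
    unfolding e_def by simp
  then obtain q where q: "q \<in> hom C Z B" "e = cmp C q g"
    using dist_factor_snd[OF d e] t by auto
  have gf: "cmp C g f = mzero C A Z" using dist_cmp_eq_mzero[OF d] .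
  have "cmp C g e = madd C g (mneg C (cmp C (cmp C g f) r))"
    using cmp_madd_right[OF ide_in_hom mneg_in_hom[OF fr] t(5)] cmp_mneg_right[OF fr t(5)]
      cmp_assoc[OF r(1) t(4) t(5)] t unfolding e_def by simp
  then have ge: "cmp C g e = g" using gf r t by simp
  have "cmp C r e = madd C r (mneg C (cmp C (cmp C r f) r))"
    using cmp_madd_right[OF ide_in_hom mneg_in_hom[OF fr] r(1)] cmp_mneg_right[OF fr r(1)]
      cmp_assoc[OF r(1) t(4) r(1)] r t unfolding e_def by simp
  then have re: "cmp C r e = mzero C B A" using r by simp
  have gq: "cmp C g q = ide C Z"
    by (rule dist_zero_conn_epi[OF d cmp_in_hom[OF q(1) t(5)] ide_in_hom[OF t(3)]])
      (use cmp_assoc[OF t(5) q(1) t(5)] q ge t in simp)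
  have rq: "cmp C r q = mzero C Z A"
    by (rule dist_zero_conn_epi[OF d cmp_in_hom[OF q(1) r(1)] mzero_in_hom[OF t(3) t(1)]])
      (use cmp_assoc[OF t(5) q(1) r(1)] q re t in simp)
  have "madd C (cmp C f r) (cmp C q g) = ide C B"
    using madd_assoc[OF fr ide_in_hom mneg_in_hom[OF fr], symmetric] madd_commute[OF fr ide_in_hom[OF t(2)]]
      madd_assoc[OF ide_in_hom fr mneg_in_hom[OF fr]] q fr t unfolding e_def by simp
  then have "is_biprod C A Z B f q r g"
    unfolding is_biprod_def using t q r gq gf rq by blast
  with that show ?thesis .
qed

lemma iso_mor_ide: "X \<in> obj C \<Longrightarrow> iso_mor C X X (ide C X)"
  unfolding iso_mor_def using cmp_ide_left[OF ide_in_hom] by blast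

lemma iso_mor_mneg_ide:
  assumes "X \<in> obj C"
  shows "iso_mor C X X (mneg C (ide C X))"
proof -
  have i: "ide C X \<in> hom C X X" using assms ..
  have "cmp C (mneg C (ide C X)) (mneg C (ide C X)) = ide C X" using cmp_mneg_mneg[OF i i] i by simp
  then show ?thesis unfolding iso_mor_def using mneg_in_hom[OF i] by blast
qed

text \<open>Rotating three times shifts a triangle and negates all three morphisms; the signs on
  the first two are removed by the triangle isomorphism (1, -1, 1).\<close>

lemma dist_unshift:
  assumes d: "(sh C A, sh C B, sh C Z, shm C f, shm C g, mneg C (shm C h)) \<in> dist C"
    and f: "f \<in> hom C A B" and g: "g \<in> hom C B Z" and h: "h \<in> hom C Z (sh C A)"
  shows "(A, B, Z, f, g, h) \<in> dist C"
proof -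
  have o: "A \<in> obj C" "B \<in> obj C" "Z \<in> obj C" using f g hom_objs by blast+
  have sf: "shm C f \<in> hom C (sh C A) (sh C B)" and sg: "shm C g \<in> hom C (sh C B) (sh C Z)"
    and sh: "shm C h \<in> hom C (sh C Z) (sh C (sh C A))" using f g h by blast+
  have "(sh C A, sh C B, sh C Z, mneg C (shm C f), mneg C (shm C g), mneg C (shm C h)) \<in> dist C"
  proof (rule dist_iso_closed[OF d mneg_in_hom[OF sf] mneg_in_hom[OF sg] mneg_in_hom[OF sh]
        iso_mor_ide iso_mor_mneg_ide iso_mor_ide])
    show "cmp C (mneg C (ide C (sh C B))) (shm C f) = cmp C (mneg C (shm C f)) (ide C (sh C A))"
      using cmp_mneg_left[OF sf ide_in_hom] cmp_ide_right[OF mneg_in_hom[OF sf]] sf o by simp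
    show "cmp C (ide C (sh C Z)) (shm C g) = cmp C (mneg C (shm C g)) (mneg C (ide C (sh C B)))"
      using cmp_mneg_mneg[OF ide_in_hom sg] sg o by simp
    show "cmp C (shm C (ide C (sh C A))) (mneg C (shm C h)) = cmp C (mneg C (shm C h)) (ide C (sh C Z))"
      using cmp_ide_left[OF mneg_in_hom[OF sh]] cmp_ide_right[OF mneg_in_hom[OF sh]] o by simp
  qed (use o in simp_all)
  then have "(Z, sh C A, sh C B, h, mneg C (shm C f), mneg C (shm C g)) \<in> dist C"
    using dist_unrotate h by blast
  then have "(B, Z, sh C A, g, h, mneg C (shm C f)) \<in> dist C"
    using dist_unrotate g by blast
  then show ?thesis using dist_unrotate f by blast
qed

lemma cmp_cancel_inverse:
  assumes i: "i \<in> hom C X P" and u: "u \<in> hom C P P'" and v: "v \<in> hom C P' P"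
    and p: "p \<in> hom C P Y" and vu: "cmp C v u = ide C P"
  shows "cmp C (cmp C p v) (cmp C u i) = cmp C p i"
  using cmp_assoc[OF cmp_in_hom[OF i u] v p] cmp_assoc[OF i u v] vu i by simp

lemma is_biprod_iso:
  assumes b: "is_biprod C X Y P i1 i2 p1 p2" and iso: "iso_mor C P P' u"
  obtains j1 j2 q1 q2 where "is_biprod C X Y P' j1 j2 q1 q2"
proof -
  obtain v where v: "v \<in> hom C P' P" "cmp C v u = ide C P" "cmp C u v = ide C P'"
    and u: "u \<in> hom C P P'"
    using iso unfolding iso_mor_def by blast
  note bb = b[unfolded is_biprod_def]
  have ip: "cmp C i1 p1 \<in> hom C P P" "cmp C i2 p2 \<in> hom C P P" using bb by blast+
  have conj: "cmp C (cmp C u i) (cmp C p v) = cmp C u (cmp C (cmp C i p) v)"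
    if "i \<in> hom C Z P" "p \<in> hom C P Z" for i p Z
    using cmp_assoc[OF cmp_in_hom[OF v(1) that(2)] that(1) u] cmp_assoc[OF v(1) that(2) that(1)] by simp
  have "madd C (cmp C (cmp C u i1) (cmp C p1 v)) (cmp C (cmp C u i2) (cmp C p2 v))
      = cmp C u (cmp C (madd C (cmp C i1 p1) (cmp C i2 p2)) v)"
    using conj bb cmp_madd_right[OF cmp_in_hom[OF v(1) ip(1)] cmp_in_hom[OF v(1) ip(2)] u]
      cmp_madd_left[OF v(1) ip] by auto
  also have "\<dots> = ide C P'" using bb v u by simp
  finally have "is_biprod C X Y P' (cmp C u i1) (cmp C u i2) (cmp C p1 v) (cmp C p2 v)"
    unfolding is_biprod_def using cmp_cancel_inverse[OF _ u v(1) _ v(2)] bb u v hom_objs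
    by (intro conjI) auto
  with that show ?thesis .
qed

lemma cmp_eq_if_shm_cmp_eq:
  assumes "j \<in> hom C X Y" "q \<in> hom C Y Z" "x \<in> hom C X Z" "cmp C (shm C q) (shm C j) = shm C x"
  shows "cmp C q j = x"
  using assms shm_inj[OF cmp_in_hom] shm_cmp by metis

lemma is_biprod_unshift:
  assumes b: "is_biprod C (sh C X) (sh C Y) (sh C P) i1 i2 p1 p2"
    and o: "X \<in> obj C" "Y \<in> obj C" "P \<in> obj C"
  obtains j1 j2 q1 q2 where "is_biprod C X Y P j1 j2 q1 q2"
proof -
  note bb = b[unfolded is_biprod_def]
  obtain j1 where j1: "j1 \<in> hom C X P" "i1 = shm C j1" using shm_surjE o bb by metis
  obtain j2 where j2: "j2 \<in> hom C Y P" "i2 = shm C j2" using shm_surjE o bb by metis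
  obtain q1 where q1: "q1 \<in> hom C P X" "p1 = shm C q1" using shm_surjE o bb by metis
  obtain q2 where q2: "q2 \<in> hom C P Y" "p2 = shm C q2" using shm_surjE o bb by metis
  have h: "cmp C j1 q1 \<in> hom C P P" "cmp C j2 q2 \<in> hom C P P" using j1 j2 q1 q2 by blast+
  have "shm C (madd C (cmp C j1 q1) (cmp C j2 q2)) = shm C (ide C P)"
    using shm_madd[OF h] shm_cmp[OF q1(1) j1(1)] shm_cmp[OF q2(1) j2(1)] bb j1 j2 q1 q2 o by simp
  then have "madd C (cmp C j1 q1) (cmp C j2 q2) = ide C P"
    using shm_inj[OF madd_in_hom[OF h] ide_in_hom[OF o(3)]] by blast
  moreover have "cmp C q1 j1 = ide C X" "cmp C q2 j2 = ide C Y"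
    "cmp C q2 j1 = mzero C X Y" "cmp C q1 j2 = mzero C Y X"
    using cmp_eq_if_shm_cmp_eq j1 j2 q1 q2 bb o by simp_all
  ultimately have "is_biprod C X Y P j1 j2 q1 q2" unfolding is_biprod_def
    using o j1 j2 q1 q2 by blast
  with that show ?thesis .
qed

subsection \<open>Cotorsion pairs\<close>

lemma ext1_zeroD:
  "ext1_zero C A B \<Longrightarrow> X \<in> A \<Longrightarrow> Y \<in> B \<Longrightarrow> hom C X (sh C Y) = {mzero C X (sh C Y)}"
  unfolding ext1_zero_def by blast

lemma ext1_zero_shift_up:
  assumes e: "ext1_zero C A B" and X: "X \<in> A" "X \<in> obj C" and Z: "Z \<in> shift_up C B"
  shows "hom C X Z = {mzero C X Z}"
proof -
  obtain Y p where "Y \<in> B" "iso_mor C Z (sh C Y) p"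
    using Z unfolding shift_up_def isomorphic_def by blast
  then show ?thesis using hom_singleton_iso_target ext1_zeroD[OF e X(1)] X(2) by blast
qed

lemma cotorsion_pairD:
  assumes "cotorsion_pair C A B"
  shows "A \<subseteq> obj C" "B \<subseteq> obj C" "ext1_zero C A B"
  using assms unfolding cotorsion_pair_def subcat_def by - (elim conjE; assumption)+

text \<open>The approximation triangle S \<rightarrow> Y[1] \<rightarrow> T[1] \<rightarrow> S[1] splits, and the right class is
  closed under direct summands.\<close>

lemma cotorsion_pair_right_memI:
  assumes cp: "cotorsion_pair C A B" and Y: "Y \<in> obj C"
    and z: "\<And>S. S \<in> A \<Longrightarrow> hom C S (sh C Y) = {mzero C S (sh C Y)}"
  shows "Y \<in> B"
proof -
  have "sh C Y \<in> star C A (shift_up C B)" using cp Y unfolding cotorsion_pair_def by blast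
  then obtain S Z f g h where S: "S \<in> A" and Z: "Z \<in> shift_up C B"
    and d: "(S, sh C Y, Z, f, g, h) \<in> dist C"
    unfolding star_def by blast
  note t = dist_triangle[OF d]
  have "f = mzero C S (sh C Y)" using z[OF S] t by blast
  then have "(sh C Y, Z, sh C S, g, h, mzero C (sh C S) (sh C (sh C Y))) \<in> dist C"
    using dist_rotate[OF d] t Y by simp
  then obtain q r where split: "is_biprod C (sh C Y) (sh C S) Z g q r h" by (rule dist_split)
  obtain T p where T: "T \<in> B" "iso_mor C Z (sh C T) p"
    using Z unfolding shift_up_def isomorphic_def by blast
  obtain j1 j2 q1 q2 where "is_biprod C (sh C Y) (sh C S) (sh C T) j1 j2 q1 q2"
    using is_biprod_iso[OF split T(2)] .
  then obtain k1 k2 l1 l2 where "is_biprod C Y S T k1 k2 l1 l2"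
    using is_biprod_unshift Y t(1) T(1) cotorsion_pairD(1,2)[OF cp] by blast
  then show ?thesis using T(1) cp unfolding cotorsion_pair_def subcat_def by blast
qed

lemma dist_cocone_cmp:
  assumes tr1: "(X0, X, T, s, a, t) \<in> dist C"
    and tr2: "(U, T, sh C V, u, b, w) \<in> dist C"
    and tr3: "(V, K, X, v, k, cmp C b a) \<in> dist C"
  obtains l m where "(X0, K, U, l, m, cmp C t u) \<in> dist C"
proof -
  note t1 = dist_triangle[OF tr1] and t2 = dist_triangle[OF tr2] and t3 = dist_triangle[OF tr3]
  obtain l m where lm: "(sh C X0, sh C K, sh C U, l, m, cmp C (shm C t) (mneg C (shm C u))) \<in> dist C"
    using dist_octahedral[OF dist_rotate[OF tr1] dist_rotate[OF tr2] dist_rotate[OF dist_rotate[OF tr3]]] .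
  note tlm = dist_triangle[OF lm]
  obtain l0 where l0: "l0 \<in> hom C X0 K" "l = shm C l0" using shm_surjE[OF t1(1) t3(2) tlm(4)] .
  obtain m0 where m0: "m0 \<in> hom C K U" "m = shm C m0" using shm_surjE[OF t3(2) t2(1) tlm(5)] .
  have tu: "cmp C t u \<in> hom C U (sh C X0)" using t1 t2 by blast
  have "cmp C (shm C t) (mneg C (shm C u)) = mneg C (shm C (cmp C t u))"
    using cmp_mneg_right[OF shm_in_hom[OF t2(4)] shm_in_hom[OF t1(6)]] shm_cmp[OF t2(4) t1(6)] by simp
  then have "(X0, K, U, l0, m0, cmp C t u) \<in> dist C"
    using dist_unshift lm l0 m0 tu by simp
  with that show ?thesis .
qed

lemma cocone_in_cotorsion_right:
  assumes cp: "cotorsion_pair C \<S> \<T>" and e: "ext1_zero C \<S> \<V>"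
    and T: "T \<in> \<T>" and V: "V \<in> \<V>" and d: "(U, T, sh C V, u, b, w) \<in> dist C"
  shows "U \<in> \<T>"
proof (rule cotorsion_pair_right_memI[OF cp dist_triangle(1)[OF d]])
  fix S assume S: "S \<in> \<S>"
  show "hom C S (sh C U) = {mzero C S (sh C U)}"
    using dist_hom_singleton_middle[OF dist_rotate[OF dist_rotate[OF d]] _ ext1_zeroD[OF e S V]
        ext1_zeroD[OF cotorsion_pairD(3)[OF cp] S T]] S cotorsion_pairD(1)[OF cp] by blast
qed

lemma cocone_cmp_in_Cminus:
  assumes twin: "twin_cotorsion_pair C \<S> \<T> \<U> \<V>"
    and X0: "sh C X0 \<in> \<S>" and T: "T \<in> \<T>" and U: "U \<in> \<U>" and V: "V \<in> \<V>"
    and tr1: "(X0, X, T, s, a, t) \<in> dist C"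
    and tr2: "(U, T, sh C V, u, b, w) \<in> dist C"
    and tr3: "(V, K, X, v, k, cmp C b a) \<in> dist C"
  shows "K \<in> Cminus C \<S> \<T> \<U>"
proof -
  have cp: "cotorsion_pair C \<S> \<T>" and e: "ext1_zero C \<S> \<V>"
    using twin unfolding twin_cotorsion_pair_def by blast+
  obtain l m where d: "(X0, K, U, l, m, cmp C t u) \<in> dist C" using dist_cocone_cmp[OF tr1 tr2 tr3] .
  have "U \<in> \<T>" using cocone_in_cotorsion_right[OF cp e T V tr2] .
  moreover have "X0 \<in> shift_down C \<S>" unfolding shift_down_def using X0 dist_triangle(1)[OF tr1] by blast
  ultimately show ?thesis unfolding Cminus_def star_def using d U dist_triangle(2)[OF d] by blast
qed

lemma cocone_in_Cplus:
  assumes twin: "twin_cotorsion_pair C \<S> \<T> \<U> \<V>"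
    and V: "V \<in> \<V>" and tr: "(V, K, X, v, k, c') \<in> dist C"
    and X: "X \<in> Cplus C \<T> \<U> \<V>"
  shows "K \<in> Cplus C \<T> \<U> \<V>"
proof -
  have cpST: "cotorsion_pair C \<S> \<T>" and cpUV: "cotorsion_pair C \<U> \<V>" and eSV: "ext1_zero C \<S> \<V>"
    using twin unfolding twin_cotorsion_pair_def by blast+
  note t = dist_triangle[OF tr]
  obtain W' Z' x c e where W': "W' \<in> \<T>" and Z': "Z' \<in> shift_up C \<V>"
    and dX: "(W', X, Z', x, c, e) \<in> dist C"
    using X unfolding Cplus_def star_def by blast
  obtain UK ZK al be ga where UK: "UK \<in> \<U>" and ZK: "ZK \<in> shift_up C \<V>"
    and dK: "(UK, K, ZK, al, be, ga) \<in> dist C"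
    using t(2) cpUV unfolding cotorsion_pair_def star_def by blast
  note tX = dist_triangle[OF dX] and tK = dist_triangle[OF dK]
  have g: "cmp C k al \<in> hom C UK X" using tK t by blast
  have cg: "cmp C c (cmp C k al) = mzero C UK Z'"
    using ext1_zero_shift_up[OF cotorsion_pairD(3)[OF cpUV] UK tK(1) Z'] cmp_in_hom[OF g tX(5)] by blast
  have "UK \<in> \<T>"
  proof (rule cotorsion_pair_right_memI[OF cpST tK(1)])
    fix S assume S: "S \<in> \<S>"
    then have So: "S \<in> obj C" using cotorsion_pairD(1)[OF cpST] by blast
    have "phi = mzero C S (sh C UK)" if phi: "phi \<in> hom C S (sh C UK)" for phi
    proof -
      have "cmp C (shm C c) (cmp C (shm C (cmp C k al)) phi) = cmp C (shm C (cmp C c (cmp C k al))) phi"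
        using cmp_assoc[OF phi shm_in_hom[OF g] shm_in_hom[OF tX(5)]] shm_cmp[OF g tX(5)] by simp
      also have "\<dots> = mzero C S (sh C Z')" using cg phi So tK tX by simp
      finally have "cmp C (shm C (cmp C k al)) phi = mzero C S (sh C X)"
        using dist_shift_hom_eq_mzero[OF dX ext1_zeroD[OF cotorsion_pairD(3)[OF cpST] S W']]
          cmp_in_hom[OF phi shm_in_hom[OF g]] by blast
      then have "cmp C (shm C k) (cmp C (shm C al) phi) = mzero C S (sh C X)"
        using cmp_assoc[OF phi shm_in_hom[OF tK(4)] shm_in_hom[OF t(5)]] shm_cmp[OF tK(4) t(5)] by simp
      then have "cmp C (shm C al) phi = mzero C S (sh C K)"
        using dist_shift_hom_eq_mzero[OF tr ext1_zeroD[OF eSV S V]] cmp_in_hom[OF phi shm_in_hom[OF tK(4)]]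
        by blast
      then show ?thesis
        using dist_hom_eq_mzero[OF dist_rotate[OF dist_rotate[OF dK]] ext1_zero_shift_up[OF eSV S So ZK] phi]
          cmp_mneg_left_eq_mzero[OF phi shm_in_hom[OF tK(4)]] by blast
    qed
    then show "hom C S (sh C UK) = {mzero C S (sh C UK)}" using So tK by blast
  qed
  then show ?thesis unfolding Cplus_def star_def using t(2) UK ZK dK by blast
qed

end

theorem claim3p2:
  fixes C :: "('o, 'm) tcat"
    and \<S> \<T> \<U> \<V> :: "'o set"
    and X0 X S0 T U V K :: 'o
    and s a t u b w v k :: 'm
  assumes tri: "triangulated C"
    and twin: "twin_cotorsion_pair C \<S> \<T> \<U> \<V>"
    and X: "X \<in> obj C"
    and S0: "S0 = sh C X0" and S0_in: "S0 \<in> \<S>" and T_in: "T \<in> \<T>"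
    and tr1: "(X0, X, T, s, a, t) \<in> dist C"
    and U_in: "U \<in> \<U>" and V_in: "V \<in> \<V>"
    and tr2: "(U, T, sh C V, u, b, w) \<in> dist C"
    and tr3: "(V, K, X, v, k, cmp C b a) \<in> dist C"
  shows "K \<in> Cminus C \<S> \<T> \<U> \<and>
         (X \<in> Cplus C \<T> \<U> \<V> \<longrightarrow> K \<in> heart C \<S> \<T> \<U> \<V>)"
proof -
  interpret triangulated_category C by (rule triangulated_category.intro[OF tri])
  have "K \<in> Cminus C \<S> \<T> \<U>"
    using cocone_cmp_in_Cminus[OF twin _ T_in U_in V_in tr1 tr2 tr3] S0 S0_in by blast
  moreover have "X \<in> Cplus C \<T> \<U> \<V> \<longrightarrow> K \<in> Cplus C \<T> \<U> \<V>"
    using cocone_in_Cplus[OF twin V_in tr3] by blast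
  ultimately show ?thesis unfolding heart_def by blast
qed

end
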